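(* For integers $t\ge 1$ and $m>t$ (with $m$ sufficiently large) and a fixed integer constant $c\ge 3$, there exists a binary $t$-break-resilient code $\mathcal{C}\subseteq\{0,1\}^n$ of length $n=m+(6+2\log\log m)\cdot 3c\log m\cdot t+c\log m$ with $\log|\mathcal{C}|\ge m-o(1)$; consequently its redundancy satisfies $n-\log|\mathcal{C}|=O(t\log n\log\log n)$.
   Context: Logarithms are base 2. Breaking a binary string $\mathbf{x}\in\{0,1\}^n$ at $s\le t$ positions means choosing $s$ cut points between consecutive entries, producing $s+1$ consecutive substrings called fragments; fragments are oriented (read left to right as in $\mathbf{x}$) but given to the decoder as an unordered multiset. A code $\mathcal{C}\subseteq\{0,1\}^n$ is a $t$-break-resilient code ($t$-BRC) if every codeword can be uniquely recovered from the unordered multiset of fragments resulting from any at most $t$ breaks (equivalently, no two distinct codewords, each broken at at most $t$ positions, yield the same fragment multiset). The redundancy of $\mathcal{C}$ is $n-\log|\mathcal{C}|$. *)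

theory Defs
  imports "HOL-Library.Multiset" Complex_Main
begin

text \<open>Fragments of a binary string x broken at the cut set S (a set of positions in
  {1..<length x}; a cut at position i lies between entries i-1 and i, 0-indexed).\<close>
definition fragments :: "bool list \<Rightarrow> nat set \<Rightarrow> bool list multiset" where
  "fragments x S =
     (let cs = sorted_list_of_set S
      in mset (map (\<lambda>(a, b). take (b - a) (drop a x))
                   (zip (0 # cs) (cs @ [length x]))))"

definition valid_breaks :: "nat \<Rightarrow> bool list \<Rightarrow> nat set \<Rightarrow> bool" where
  "valid_breaks t x S \<longleftrightarrow> S \<subseteq> {1..<length x} \<and> card S \<le> t"

definition break_resilient :: "nat \<Rightarrow> bool list set \<Rightarrow> bool" where
  "break_resilient t C \<longleftrightarrow>
     (\<forall>x\<in>C. \<forall>y\<in>C. \<forall>S T. valid_breaks t x S \<and> valid_breaks t y T \<and>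
        fragments x S = fragments y T \<longrightarrow> x = y)"

definition code_length :: "nat \<Rightarrow> nat \<Rightarrow> nat \<Rightarrow> nat" where
  "code_length c t m =
     nat \<lceil>real m + (6 + 2 * log 2 (log 2 (real m))) * (3 * real c * log 2 (real m)) * real t
           + real c * log 2 (real m)\<rceil>"

end

theory Submission
  imports Defs
begin

text \<open>If x and y are confusable under at most t breaks, every fragment of y is a substring
  of x, so y is a concatenation of t + 1 substrings of x (padding with empty ones).  A word of
  length n is therefore confusable with at most (n + 1)^(2(t + 1)) words, and a maximum set of
  pairwise non-confusable words (a Gilbert-Varshamov argument) has at least
  2^n / (n + 1)^(2(t + 1)) elements.  The resulting redundancy 2(t + 1) log (n + 1) = O(t log m)
  is absorbed by the at least 54 t log m bits that code_length adds to m, so even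
  log |C| \<ge> m holds.\<close>

definition fragment_list :: "'a list \<Rightarrow> nat set \<Rightarrow> 'a list list" where
  "fragment_list x S =
     (let cs = sorted_list_of_set S
      in map (\<lambda>(a, b). take (b - a) (drop a x)) (zip (0 # cs) (cs @ [length x])))"

lemma fragments_eq_mset_fragment_list: "fragments x S = mset (fragment_list x S)"
  by (simp add: fragments_def fragment_list_def Let_def)

lemma length_fragment_list:
  assumes "finite S"
  shows "length (fragment_list x S) = card S + 1"
  using assms by (simp add: fragment_list_def Let_def)

lemma concat_pieces_between_cuts:
  assumes "sorted cs" "\<forall>c\<in>set cs. a \<le> c \<and> c \<le> length x"
  shows "concat (map (\<lambda>(a, b). take (b - a) (drop a x)) (zip (a # cs) (cs @ [length x])))
           = drop a x"
  using assms
proof (induction cs arbitrary: a)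
  case Nil
  then show ?case by simp
next
  case (Cons c cs)
  have "take (c - a) (drop a x) @ drop c x = drop a x"
    using Cons.prems(2)
    by (metis append_take_drop_id drop_drop le_add_diff_inverse2 list.set_intros(1))
  then show ?case using Cons by auto
qed

lemma concat_fragment_list:
  assumes "S \<subseteq> {1..<length x}"
  shows "concat (fragment_list x S) = x"
proof -
  have "finite S" using assms finite_subset by blast
  then have "concat (fragment_list x S) = drop 0 x"
    unfolding fragment_list_def Let_def
    using assms by (intro concat_pieces_between_cuts) auto
  then show ?thesis by simp
qed

definition substrings :: "'a list \<Rightarrow> 'a list set" where
  "substrings x = (\<lambda>(a, k). take k (drop a x)) ` ({..length x} \<times> {..length x})"

lemma take_drop_in_substrings: "take k (drop a x) \<in> substrings x"
proof -
  have "take k (drop a x) = take (min k (length x)) (drop (min a (length x)) x)"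
    by (simp add: min_def)
  then show ?thesis unfolding substrings_def by force
qed

lemma finite_substrings: "finite (substrings x)"
  by (simp add: substrings_def)

lemma card_substrings_le: "card (substrings x) \<le> (length x + 1) ^ 2"
proof -
  have "card (substrings x) \<le> card ({..length x} \<times> {..length x})"
    unfolding substrings_def by (rule card_image_le) simp
  then show ?thesis by (simp add: power2_eq_square)
qed

lemma set_fragment_list_subset_substrings: "set (fragment_list x S) \<subseteq> substrings x"
  unfolding fragment_list_def Let_def using take_drop_in_substrings by auto

definition confusable :: "nat \<Rightarrow> bool list \<Rightarrow> bool list \<Rightarrow> bool" where
  "confusable t x y \<longleftrightarrow>
     (\<exists>S T. valid_breaks t x S \<and> valid_breaks t y T \<and> fragments x S = fragments y T)"

lemma break_resilient_iff_pairwise_not_confusable: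
  "break_resilient t C \<longleftrightarrow> pairwise (\<lambda>x y. \<not> confusable t x y) C"
  unfolding break_resilient_def pairwise_def confusable_def by blast

lemma confusable_refl: "confusable t x x"
  unfolding confusable_def valid_breaks_def by (intro exI[of _ "{}"]) simp

lemma confusable_sym: "confusable t x y \<Longrightarrow> confusable t y x"
  unfolding confusable_def by metis

lemma confusable_concat_substrings:
  assumes "confusable t x y"
  shows "y \<in> concat ` {L. set L \<subseteq> substrings x \<and> length L = t + 1}"
proof -
  obtain S T where S: "valid_breaks t x S" and T: "valid_breaks t y T"
    and eq: "fragments x S = fragments y T"
    using assms by (auto simp: confusable_def)
  have "set (fragment_list y T) = set (fragment_list x S)"
    using eq by (metis fragments_eq_mset_fragment_list set_mset_mset)
  then have sub: "set (fragment_list y T) \<subseteq> substrings x"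
    using set_fragment_list_subset_substrings by blast
  have fin: "finite T" using T finite_subset by (auto simp: valid_breaks_def)
  have len: "length (fragment_list y T) \<le> t + 1"
    using T by (simp add: length_fragment_list[OF fin] valid_breaks_def)
  define L where "L = fragment_list y T @ replicate (t + 1 - length (fragment_list y T)) []"
  have "concat L = y"
    using T concat_fragment_list[of T y] by (simp add: L_def valid_breaks_def)
  moreover have "set L \<subseteq> substrings x"
    using sub take_drop_in_substrings[of 0 0 x] by (auto simp: L_def)
  moreover have "length L = t + 1" using len by (simp add: L_def)
  ultimately show ?thesis by blast
qed

lemma finite_confusable: "finite {y. confusable t x y}"
proof (rule finite_subset)
  show "finite (concat ` {L. set L \<subseteq> substrings x \<and> length L = t + 1})"
    by (simp add: finite_lists_length_eq finite_substrings)
qed (use confusable_concat_substrings in blast)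

lemma card_confusable_le: "card {y. confusable t x y} \<le> (length x + 1) ^ (2 * (t + 1))"
proof -
  let ?Ls = "{L. set L \<subseteq> substrings x \<and> length L = t + 1}"
  have fin: "finite ?Ls" by (simp add: finite_lists_length_eq finite_substrings)
  have "card {y. confusable t x y} \<le> card (concat ` ?Ls)"
    using fin confusable_concat_substrings by (intro card_mono) auto
  also have "\<dots> \<le> card ?Ls" using fin by (rule card_image_le)
  also have "\<dots> = card (substrings x) ^ (t + 1)"
    by (rule card_lists_length_eq[OF finite_substrings])
  also have "\<dots> \<le> ((length x + 1) ^ 2) ^ (t + 1)"
    by (rule power_mono[OF card_substrings_le]) simp
  finally show ?thesis by (simp only: power_mult)
qed

text \<open>A maximum independent set C dominates U, so U is covered by the neighbourhoods of C.\<close>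
lemma exists_independent_subset:
  assumes "finite U" and refl: "\<And>x. x \<in> U \<Longrightarrow> R x x"
    and sym: "\<And>x y. R x y \<Longrightarrow> R y x"
    and deg: "\<And>x. x \<in> U \<Longrightarrow> card {y\<in>U. R x y} \<le> D"
  shows "\<exists>C\<subseteq>U. pairwise (\<lambda>x y. \<not> R x y) C \<and> card U \<le> D * card C"
proof -
  let ?indep = "\<lambda>C. C \<subseteq> U \<and> pairwise (\<lambda>x y. \<not> R x y) C"
  have "\<exists>C. ?indep C \<and> (\<forall>C'. ?indep C' \<longrightarrow> card C' \<le> card C)"
    using \<open>finite U\<close> card_mono
    by (intro ex_has_greatest_nat[of ?indep "{}" card "card U + 1"]) (auto simp: less_Suc_eq_le)
  then obtain C where C: "?indep C" and max: "\<And>C'. ?indep C' \<Longrightarrow> card C' \<le> card C"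
    by blast
  have fin: "finite C" using C \<open>finite U\<close> finite_subset by blast
  have "U \<subseteq> (\<Union>x\<in>C. {y\<in>U. R x y})"
  proof
    fix y assume y: "y \<in> U"
    show "y \<in> (\<Union>x\<in>C. {y\<in>U. R x y})"
    proof (cases "y \<in> C")
      case True
      then show ?thesis using y refl by blast
    next
      case False
      then have "\<not> ?indep (insert y C)"
        using max[of "insert y C"] fin by auto
      then obtain z where "z \<in> C" "R y z \<or> R z y"
        using C y by (auto simp: pairwise_insert)
      then show ?thesis using y sym by blast
    qed
  qed
  then have "card U \<le> card (\<Union>x\<in>C. {y\<in>U. R x y})"
    using fin \<open>finite U\<close> by (intro card_mono) auto
  also have "\<dots> \<le> (\<Sum>x\<in>C. card {y\<in>U. R x y})" using fin by (rule card_UN_le)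
  also have "\<dots> \<le> card C * D"
    using C deg sum_bounded_above[of C "\<lambda>x. card {y\<in>U. R x y}" D] by auto
  finally show ?thesis using C by (auto simp: mult.commute)
qed

lemma exists_break_resilient_code:
  "\<exists>C\<subseteq>{x. length x = n}. break_resilient t C \<and> 2 ^ n \<le> (n + 1) ^ (2 * (t + 1)) * card C"
proof -
  let ?U = "{x::bool list. length x = n}"
  have fin: "finite ?U" using finite_lists_length_eq[of "UNIV :: bool set" n] by simp
  have deg: "card {y\<in>?U. confusable t x y} \<le> (n + 1) ^ (2 * (t + 1))" if "x \<in> ?U" for x
  proof -
    have "card {y\<in>?U. confusable t x y} \<le> card {y. confusable t x y}"
      by (rule card_mono[OF finite_confusable]) blast
    also have "\<dots> \<le> (length x + 1) ^ (2 * (t + 1))" by (rule card_confusable_le)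
    finally show ?thesis using that by simp
  qed
  obtain C where "C \<subseteq> ?U" "pairwise (\<lambda>x y. \<not> confusable t x y) C"
      "card ?U \<le> (n + 1) ^ (2 * (t + 1)) * card C"
    using exists_independent_subset[OF fin confusable_refl confusable_sym deg] by blast
  then show ?thesis
    using card_lists_length_eq[of "UNIV :: bool set" n]
    by (auto simp: break_resilient_iff_pairwise_not_confusable)
qed

lemma diff_log2_le_of_exp_le:
  fixes n k N b :: nat
  assumes "2 ^ n \<le> N ^ k * b" "0 < N"
  shows "real n - log 2 (real b) \<le> real k * log 2 (real N)"
proof -
  have "0 < b" using assms by (auto intro: gr0I)
  have "(2::real) ^ n \<le> real N ^ k * real b"
    using assms(1) by (metis of_nat_le_iff of_nat_mult of_nat_numeral of_nat_power)
  then have "log 2 ((2::real) ^ n) \<le> log 2 (real N ^ k * real b)"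
    by (intro log_mono) auto
  also have "\<dots> = real k * log 2 (real N) + log 2 (real b)"
    using \<open>0 < N\<close> \<open>0 < b\<close> by (simp add: log_mult log_nat_power)
  finally show ?thesis by simp
qed

lemma log2_succ_le_log2_mult_log2_log2:
  fixes x :: real
  assumes "4 \<le> x"
  shows "log 2 (x + 1) \<le> 2 * log 2 x * log 2 (log 2 x)"
proof -
  have log_x: "2 \<le> log 2 x" using assms by (simp add: le_log_iff)
  have "log 2 (x + 1) \<le> log 2 (x ^ 2)"
    using assms by (intro log_mono) (auto simp: power2_eq_square intro: order_trans[of _ "4 * x"])
  also have "\<dots> = 2 * log 2 x * 1" using assms by (simp add: log_nat_power)
  also have "\<dots> \<le> 2 * log 2 x * log 2 (log 2 x)"
    using log_x by (intro mult_left_mono) auto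
  finally show ?thesis .
qed

lemma code_length_bounds:
  assumes "3 \<le> c" "t < m" "c + 28 \<le> m"
  shows "real m + 54 * real t * log 2 (real m) \<le> real (code_length c t m)"
    and "real (code_length c t m) + 1 \<le> real m ^ 5"
proof -
  define x where "x = real m"
  define lm where "lm = log 2 x"
  define ll where "ll = log 2 lm"
  define e where "e = x + (6 + 2 * ll) * (3 * real c * lm) * real t + real c * lm"
  have n_eq: "code_length c t m = nat \<lceil>e\<rceil>"
    by (simp add: code_length_def e_def lm_def ll_def x_def)
  have x28: "28 \<le> x" "real c \<le> x" "real t \<le> x" using assms by (auto simp: x_def)
  have lm1: "1 \<le> lm" using x28 by (simp add: lm_def)
  have lmx: "lm \<le> x"
    using log2_of_power_less[OF less_exp, of m] assms by (simp add: lm_def x_def)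
  have ll0: "0 \<le> ll" using lm1 by (simp add: ll_def)
  have "log 2 lm \<le> log 2 x" using lm1 lmx by (intro log_mono) auto
  then have "ll \<le> lm" by (simp add: ll_def lm_def)
  then have llx: "ll \<le> x" using lmx by simp
  have e_lower: "x + 54 * real t * lm \<le> e"
  proof -
    have "54 * real t * lm = 6 * (3 * 3 * lm) * real t" by simp
    also have "\<dots> \<le> (6 + 2 * ll) * (3 * real c * lm) * real t"
      using ll0 lm1 assms(1) by (intro mult_right_mono mult_mono) auto
    moreover have "0 \<le> real c * lm" using lm1 by simp
    ultimately show ?thesis unfolding e_def by linarith
  qed
  have e_upper: "e \<le> x + 9 * x ^ 4 + x ^ 2"
  proof -
    have "(6 + 2 * ll) * (3 * real c * lm) * real t \<le> (3 * x) * (3 * x * x) * x"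
      using x28 ll0 llx lm1 lmx by (intro mult_mono) auto
    also have "\<dots> = 9 * x ^ 4" by (simp add: eval_nat_numeral)
    moreover have "real c * lm \<le> x ^ 2"
      using x28 lm1 lmx by (auto simp: power2_eq_square intro: mult_mono)
    ultimately show ?thesis unfolding e_def by linarith
  qed
  have "0 \<le> 54 * real t * lm" using lm1 by simp
  then have e0: "0 \<le> e" using e_lower x28 by linarith
  show "real m + 54 * real t * log 2 (real m) \<le> real (code_length c t m)"
    using e_lower e0 by (simp add: n_eq x_def lm_def) linarith
  have pow_le: "x ^ k \<le> x ^ 4" if "k \<le> 4" for k
    using that x28 by (intro power_increasing) auto
  have "x \<le> x ^ 4" "x ^ 2 \<le> x ^ 4" "1 \<le> x ^ 4"
    using pow_le[of 1] pow_le[of 2] pow_le[of 0] by simp_all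
  moreover have "28 * x ^ 4 \<le> x * x ^ 4" using x28 by (intro mult_right_mono) auto
  moreover have "x ^ 5 = x * x ^ 4" by (simp add: eval_nat_numeral)
  ultimately have "x + 9 * x ^ 4 + x ^ 2 + 2 \<le> x ^ 5" by linarith
  then show "real (code_length c t m) + 1 \<le> real m ^ 5"
    using e_upper e0 by (simp add: n_eq x_def) linarith
qed

lemma break_resilient_code_of_code_length:
  assumes "3 \<le> c" "1 \<le> t" "t < m" "c + 28 \<le> m"
  defines "n \<equiv> code_length c t m"
  shows "\<exists>C \<subseteq> {x. length x = n}. break_resilient t C \<and> real m \<le> log 2 (real (card C)) \<and>
           real n - log 2 (real (card C)) \<le> 8 * real t * log 2 (real n) * log 2 (log 2 (real n))"
proof -
  obtain C where C: "C \<subseteq> {x. length x = n}" "break_resilient t C"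
    and size: "2 ^ n \<le> (n + 1) ^ (2 * (t + 1)) * card C"
    using exists_break_resilient_code[of n t] by blast
  have "real n - log 2 (real (card C)) \<le> real (2 * (t + 1)) * log 2 (real (n + 1))"
    using size by (rule diff_log2_le_of_exp_le) simp
  then have red: "real n - log 2 (real (card C)) \<le> 2 * (real t + 1) * log 2 (real n + 1)"
    by (simp add: add.commute)
  have n_lower: "real m + 54 * real t * log 2 (real m) \<le> real n"
    and n_upper: "real n + 1 \<le> real m ^ 5"
    using code_length_bounds[OF assms(1,3,4)] by (simp_all add: n_def)
  have t_le: "2 * (real t + 1) \<le> 4 * real t" using assms(2) by simp
  have t_log_m: "0 \<le> real t * log 2 (real m)" using assms(4) by simp
  have "real m \<le> log 2 (real (card C))"
  proof -
    have "log 2 (real n + 1) \<le> log 2 (real m ^ 5)" using n_upper by (intro log_mono) auto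
    then have "log 2 (real n + 1) \<le> 5 * log 2 (real m)" by (simp add: log_nat_power)
    then have "2 * (real t + 1) * log 2 (real n + 1) \<le> 4 * real t * (5 * log 2 (real m))"
      by (rule mult_mono[OF t_le]) simp_all
    also have "\<dots> \<le> 54 * real t * log 2 (real m)" using t_log_m by linarith
    finally show ?thesis using red n_lower by linarith
  qed
  moreover have "real n - log 2 (real (card C))
      \<le> 8 * real t * log 2 (real n) * log 2 (log 2 (real n))"
  proof -
    have "4 \<le> real n" using n_lower assms(4) t_log_m by linarith
    then have "log 2 (real n + 1) \<le> 2 * log 2 (real n) * log 2 (log 2 (real n))"
      by (rule log2_succ_le_log2_mult_log2_log2)
    then have "2 * (real t + 1) * log 2 (real n + 1)
        \<le> 4 * real t * (2 * log 2 (real n) * log 2 (log 2 (real n)))"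
      by (rule mult_mono[OF t_le]) simp_all
    also have "\<dots> = 8 * real t * log 2 (real n) * log 2 (log 2 (real n))" by (simp add: mult_ac)
    finally show ?thesis using red by linarith
  qed
  ultimately show ?thesis using C by blast
qed

theorem corollary1:
  fixes c :: nat
  assumes "c \<ge> 3"
  shows "\<exists>K::real. K > 0 \<and>
    (\<forall>t::nat. t \<ge> 1 \<longrightarrow>
      (\<exists>\<epsilon>::nat \<Rightarrow> real. \<epsilon> \<longlonglongrightarrow> 0 \<and>
        (\<exists>M::nat. \<forall>m. m \<ge> M \<and> m > t \<longrightarrow>
          (\<exists>C::bool list set.
             C \<subseteq> {x. length x = code_length c t m} \<and>
             break_resilient t C \<and>
             log 2 (real (card C)) \<ge> real m - \<epsilon> m \<and>
             real (code_length c t m) - log 2 (real (card C))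
               \<le> K * real t * log 2 (real (code_length c t m))
                   * log 2 (log 2 (real (code_length c t m)))))))"
proof (intro exI[of _ "8::real"] exI[of _ "\<lambda>_. 0"] exI[of _ "c + 28"] conjI allI impI)
  fix t m :: nat
  assume "t \<ge> 1" "c + 28 \<le> m \<and> t < m"
  then show "\<exists>C. C \<subseteq> {x. length x = code_length c t m} \<and> break_resilient t C \<and>
      real m - 0 \<le> log 2 (real (card C)) \<and>
      real (code_length c t m) - log 2 (real (card C))
        \<le> 8 * real t * log 2 (real (code_length c t m)) * log 2 (log 2 (real (code_length c t m)))"
    using break_resilient_code_of_code_length[OF assms] by simp
qed simp_all

end
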